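(* In the setting described in the context, assume $x_h^2\beta>3$ and $n>\max\{\frac1{2\alpha x_h^2\beta}-\frac1{x_h^2\beta},\ \frac\alpha{x_h^2\beta},\ \frac\alpha{x_h^2\beta}(e^{\frac2{x_h^2\beta}}-2)+\frac1{2x_h^2\beta}\}$, let $\dot k=\frac1{2n}\log_\lambda\Big(\frac1{1+\frac1{\alpha\eta}(1-\lambda^2)}\Big)-1$ and $T=(\lceil\dot k\rceil+1)n$. Then approximate sampling by running this SGLD for $T$ steps (releasing the $T$-th iterate) is not $(\epsilon,\delta)$-differentially private for any $0\le\delta<0.5$ and $$\epsilon<e^{-\frac2{x_h^2\beta}}\frac\alpha{v_1}\Big(\frac3{32x_h^2\beta}\Big)^2\Big(\frac cn\Big)^2+\ln(0.5-\delta),\qquad v_1=\max\{6,1+2e^{\frac1{x_h^2\beta}}\};$$ that is, for such $\epsilon,\delta$ there is a measurable set $S$ with $\Pr[\theta_T\in S]>e^\epsilon\Pr[\hat\theta_T\in S]+\delta$, where $\theta_T$ and $\hat\theta_T$ are the $T$-th iterates on the neighboring databases $D_1$ and $D_2$.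
   Context: A mechanism $M$ is $(\epsilon,\delta)$-differentially private if $\Pr[M(D)\in S]\le e^\epsilon\Pr[M(\hat D)\in S]+\delta$ for all measurable $S$ and all neighboring databases (differing in one record). Fix $\alpha,\beta,x_h,c>0$ and an integer $n\ge2$. Model: $y=\theta x+\xi$, $\xi\sim\mathcal N(0,\beta^{-1})$, prior $\theta\sim\mathcal N(0,\alpha^{-1})$. Databases: $D_1$ consists of $n$ copies of $(x_h,cx_h)$; $D_2$ consists of $n-1$ copies of $(x_h,cx_h)$ and one copy of $(x_h/2,cx_h/2)$. Cyclic SGLD with batch size 1 and step size $\eta=\frac2{(\alpha+nx_h^2\beta)^2}$: $\theta_0\sim\mathcal N(0,\alpha^{-1})$, $\theta_{j+1}=\theta_j+\frac\eta2[-\alpha\theta_j+n\beta(y_{i_j}-\theta_jx_{i_j})x_{i_j}]+\sqrt\eta\,\xi_j$ with $\xi_j\sim\mathcal N(0,1)$ i.i.d. independent of $\theta_0$; the database is shuffled once uniformly at random and its samples are then used cyclically in that order. Set $\lambda=1-\frac\eta2(\alpha+nx_h^2\beta)$. *)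

theory Defs
  imports "HOL-Probability.Probability"
begin

definition sgld_step :: "real \<Rightarrow> real \<Rightarrow> nat \<Rightarrow> real \<Rightarrow> real \<times> real \<Rightarrow> real \<Rightarrow> real \<Rightarrow> real" where
  "sgld_step \<alpha> \<beta> n \<eta> r \<theta> z =
     \<theta> + \<eta> / 2 * (- \<alpha> * \<theta> + real n * \<beta> * (snd r - \<theta> * fst r) * fst r) + sqrt \<eta> * z"

text \<open>Cyclic SGLD iterates: the database D (length n) is shuffled once by the permutation
  \<sigma> of {..<n}; step j uses record D ! \<sigma> (j mod n); \<theta>0 is the initial point and
  \<xi> j the Gaussian noise of step j.\<close>
fun sgld_iter :: "real \<Rightarrow> real \<Rightarrow> real \<Rightarrow> (real \<times> real) list \<Rightarrow> (nat \<Rightarrow> nat)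
                   \<Rightarrow> real \<Rightarrow> (nat \<Rightarrow> real) \<Rightarrow> nat \<Rightarrow> real" where
  "sgld_iter \<alpha> \<beta> \<eta> D \<sigma> \<theta>0 \<xi> 0 = \<theta>0"
| "sgld_iter \<alpha> \<beta> \<eta> D \<sigma> \<theta>0 \<xi> (Suc j) =
     sgld_step \<alpha> \<beta> (length D) \<eta> (D ! \<sigma> (j mod length D)) (sgld_iter \<alpha> \<beta> \<eta> D \<sigma> \<theta>0 \<xi> j) (\<xi> j)"

definition sgld_space :: "real \<Rightarrow> nat \<Rightarrow> ((nat \<Rightarrow> nat) \<times> real \<times> (nat \<Rightarrow> real)) measure" where
  "sgld_space \<alpha> n =
     measure_pmf (pmf_of_set {p. p permutes {..<n}})
     \<Otimes>\<^sub>M (density lborel (normal_density 0 (sqrt (1 / \<alpha>)))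
          \<Otimes>\<^sub>M (\<Pi>\<^sub>M i\<in>(UNIV :: nat set). std_normal_distribution))"

definition sgld_output :: "real \<Rightarrow> real \<Rightarrow> real \<Rightarrow> (real \<times> real) list \<Rightarrow> nat \<Rightarrow> real measure" where
  "sgld_output \<alpha> \<beta> \<eta> D T =
     distr (sgld_space \<alpha> (length D)) borel (\<lambda>(\<sigma>, \<theta>0, \<xi>). sgld_iter \<alpha> \<beta> \<eta> D \<sigma> \<theta>0 \<xi> T)"

end

theory Submission
  imports Defs
begin

(*
  Fix the shuffle sigma. Every SGLD step is then an affine map theta |-> a_j * theta + b_j plus
  independent Gaussian noise, so the released iterate is Gaussian with mean affine_mean a b T and
  variance (prod a_j)^2 / alpha + noise_variance a (sqrt eta) T. Take as threshold t the mean of the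
  iterate on D1; it is exceeded with probability 1/2, whatever sigma is.

  On D2 the steps using the halved record contract less and move a quarter as far, so the mean on
  D2 stays below t. The first and the last pass through the halved record alone give a gap d with
  d^2 >= 2 K v, where v is the variance on D2 (bounded by its stationary value). The Gaussian tail
  bound then gives P(theta_T >= t) <= exp (-K) on D2, whereas (epsilon, delta)-privacy with
  epsilon < K + ln (1/2 - delta) would force this probability above exp (-epsilon) (1/2 - delta) > exp (-K).

  Everything is computed in the rescaled parameters A = alpha + n x_h^2 beta and s = n x_h^2 beta / A,
  in which eta = 2 / A^2 and the D1 step is theta |-> (1 - 1/A) theta + c s / A.
*)

section \<open>Gaussian facts\<close>

lemma (in pair_prob_space) distr_pair_snd: "distr (M1 \<Otimes>\<^sub>M M2) M2 snd = M2"
proof -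
  have "distr (M1 \<Otimes>\<^sub>M M2) M2 snd = distr (distr (M2 \<Otimes>\<^sub>M M1) (M1 \<Otimes>\<^sub>M M2) (\<lambda>(x, y). (y, x))) M2 snd"
    by (simp only: distr_pair_swap[symmetric])
  also have "\<dots> = distr (M2 \<Otimes>\<^sub>M M1) M2 fst"
    by (subst distr_distr) (auto simp: comp_def split_beta')
  also have "\<dots> = M2" by (rule M1.distr_pair_fst)
  finally show ?thesis .
qed

lemma (in pair_prob_space) indep_var_compose_fst_snd:
  assumes f: "f \<in> M1 \<rightarrow>\<^sub>M N" and g: "g \<in> M2 \<rightarrow>\<^sub>M N"
  shows "P.indep_var N (\<lambda>z. f (fst z)) N (\<lambda>z. g (snd z))"
proof -
  have "distr (M1 \<Otimes>\<^sub>M M2) N (\<lambda>z. f (fst z)) = distr M1 N f"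
    using f by (subst M2.distr_pair_fst[of M1, symmetric]) (simp add: distr_distr comp_def)
  moreover have "distr (M1 \<Otimes>\<^sub>M M2) N (\<lambda>z. g (snd z)) = distr M2 N g"
    using g by (subst distr_pair_snd[symmetric]) (simp add: distr_distr comp_def)
  moreover have "distr M1 N f \<Otimes>\<^sub>M distr M2 N g = distr (M1 \<Otimes>\<^sub>M M2) (N \<Otimes>\<^sub>M N) (\<lambda>z. (f (fst z), g (snd z)))"
    using f g by (subst pair_measure_distr) (auto intro!: prob_space_imp_sigma_finite M2.prob_space_distr simp: split_beta')
  ultimately show ?thesis
    using f g by (simp add: P.indep_var_distribution_eq)
qed

lemma (in product_prob_space) indep_vars_PiM_components:
  assumes "I \<noteq> {}"
  shows "prob_space.indep_vars (PiM I M) M (\<lambda>i \<omega>. \<omega> i) I"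
proof -
  have "distr (PiM I M) (PiM I M) (\<lambda>\<omega>. \<lambda>i\<in>I. \<omega> i) = PiM I M"
    by (subst distr_cong[where g = "\<lambda>\<omega>. \<omega>"]) (auto simp: space_PiM PiE_def extensional_restrict distr_id2)
  then show ?thesis
    using assms by (subst P.indep_vars_iff_distr_eq_PiM') (auto intro!: PiM_cong simp: PiM_component)
qed

lemma product_prob_space_std_normal: "product_prob_space (\<lambda>_. std_normal_distribution)"
  by (auto simp: product_prob_space_def product_sigma_finite_def product_prob_space_axioms_def
      prob_space_normal_density prob_space_imp_sigma_finite)

lemma distributed_weighted_sum_std_normal:
  fixes w :: "'i \<Rightarrow> real"
  assumes "finite I" "I \<noteq> {}" "\<And>i. i \<in> I \<Longrightarrow> w i \<noteq> 0"
  shows "distributed (\<Pi>\<^sub>M i\<in>UNIV. std_normal_distribution) lborel (\<lambda>\<omega>. \<Sum>i\<in>I. w i * \<omega> i)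
           (normal_density 0 (sqrt (\<Sum>i\<in>I. (w i)\<^sup>2)))"
proof -
  interpret S: product_prob_space "\<lambda>_. std_normal_distribution" UNIV
    by (rule product_prob_space_std_normal)
  have component: "distributed (\<Pi>\<^sub>M i\<in>UNIV. std_normal_distribution) lborel (\<lambda>\<omega>. \<omega> i) std_normal_density" for i
  proof -
    have "distr (\<Pi>\<^sub>M i\<in>UNIV. std_normal_distribution) lborel (\<lambda>\<omega>. \<omega> i) =
          distr (\<Pi>\<^sub>M i\<in>UNIV. std_normal_distribution) std_normal_distribution (\<lambda>\<omega>. \<omega> i)"
      by (rule distr_cong) simp_all
    then show ?thesis
      by (simp add: distributed_def S.PiM_component)
  qed
  have "distributed (\<Pi>\<^sub>M i\<in>UNIV. std_normal_distribution) lborel (\<lambda>\<omega>. w i * \<omega> i) (normal_density 0 \<bar>w i\<bar>)"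
    if "i \<in> I" for i
    using S.normal_density_affine[OF component, where \<alpha> = "w i" and \<beta> = 0] assms(3)[OF that] by simp
  moreover have "S.indep_vars (\<lambda>_. borel) (\<lambda>i \<omega>. w i * \<omega> i) I"
    by (rule S.indep_vars_compose2[OF S.indep_vars_subset[OF S.indep_vars_PiM_components]]) auto
  ultimately show ?thesis
    using S.sum_indep_normal[of I "\<lambda>i \<omega>. w i * \<omega> i" "\<lambda>i. \<bar>w i\<bar>" "\<lambda>_. 0"] assms
    by simp
qed

lemma (in prob_space) prob_normal_nonneg_ge_half:
  assumes X: "distributed M lborel X (normal_density 0 \<sigma>)" and "0 < \<sigma>"
  shows "1 / 2 \<le> prob {x \<in> space M. 0 \<le> X x}"
proof -
  have "distributed M lborel (\<lambda>x. 0 + (- 1) * X x) (normal_density (0 + (- 1) * 0) (\<bar>- 1\<bar> * \<sigma>))"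
    using assms by (intro normal_density_affine) auto
  then have negX: "distributed M lborel (\<lambda>x. - X x) (normal_density 0 \<sigma>)" by simp
  have "emeasure M {x \<in> space M. 0 \<le> - X x} = emeasure M {x \<in> space M. 0 \<le> X x}"
    using distributed_emeasure[OF negX, of "{0..}"] distributed_emeasure[OF X, of "{0..}"]
    by (simp add: vimage_def Int_def conj_commute)
  then have sym: "prob {x \<in> space M. X x \<le> 0} = prob {x \<in> space M. 0 \<le> X x}"
    by (simp add: emeasure_eq_measure)
  have rv: "random_variable borel X"
    using distributed_measurable[OF X] by simp
  have "1 = prob ({x \<in> space M. 0 \<le> X x} \<union> {x \<in> space M. X x \<le> 0})"
    by (subst prob_space[symmetric]) (auto intro!: arg_cong[where f = prob])
  also have "\<dots> \<le> prob {x \<in> space M. 0 \<le> X x} + prob {x \<in> space M. X x \<le> 0}"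
    using rv by (intro measure_Un_le) auto
  finally show ?thesis using sym by simp
qed

lemma normal_density_le_shifted:
  assumes "0 < \<sigma>" "0 \<le> d" "d \<le> x"
  shows "normal_density 0 \<sigma> x \<le> exp (- d\<^sup>2 / (2 * \<sigma>\<^sup>2)) * normal_density d \<sigma> x"
proof -
  have "(x - d)\<^sup>2 + d\<^sup>2 \<le> x\<^sup>2"
    using assms mult_nonneg_nonneg[of d "x - d"] by (simp add: power2_eq_square algebra_simps)
  then have "- x\<^sup>2 / (2 * \<sigma>\<^sup>2) \<le> - d\<^sup>2 / (2 * \<sigma>\<^sup>2) + - (x - d)\<^sup>2 / (2 * \<sigma>\<^sup>2)"
    using assms(1) by (simp add: divide_simps)
  then have "exp (- x\<^sup>2 / (2 * \<sigma>\<^sup>2)) / sqrt (2 * pi * \<sigma>\<^sup>2)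
      \<le> exp (- d\<^sup>2 / (2 * \<sigma>\<^sup>2)) * exp (- (x - d)\<^sup>2 / (2 * \<sigma>\<^sup>2)) / sqrt (2 * pi * \<sigma>\<^sup>2)"
    by (intro divide_right_mono) (auto simp: mult_exp_exp)
  then show ?thesis
    by (simp add: normal_density_def)
qed

lemma (in prob_space) prob_normal_tail_le:
  assumes X: "distributed M lborel X (normal_density 0 \<sigma>)" and "0 < \<sigma>" "0 \<le> d"
  shows "prob {x \<in> space M. d \<le> X x} \<le> exp (- d\<^sup>2 / (2 * \<sigma>\<^sup>2))"
proof -
  have "emeasure M {x \<in> space M. d \<le> X x} = (\<integral>\<^sup>+x\<in>{d..}. normal_density 0 \<sigma> x \<partial>lborel)"
    using distributed_emeasure[OF X, of "{d..}"] by (simp add: vimage_def Int_def conj_commute)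
  also have "\<dots> \<le> (\<integral>\<^sup>+x. exp (- d\<^sup>2 / (2 * \<sigma>\<^sup>2)) * normal_density d \<sigma> x \<partial>lborel)"
    using normal_density_le_shifted[OF assms(2,3)]
    by (intro nn_integral_mono) (auto simp: indicator_def ennreal_leI)
  also have "\<dots> = ennreal (exp (- d\<^sup>2 / (2 * \<sigma>\<^sup>2)))"
    using assms(2) by (simp add: ennreal_mult nn_integral_cmult nn_integral_eq_integral)
  finally show ?thesis
    by (simp add: emeasure_eq_measure)
qed

section \<open>The SGLD noise and the affine form of the iterates\<close>

definition sgld_noise :: "real \<Rightarrow> (real \<times> (nat \<Rightarrow> real)) measure" where
  "sgld_noise \<alpha> =
     density lborel (normal_density 0 (sqrt (1 / \<alpha>))) \<Otimes>\<^sub>M (\<Pi>\<^sub>M i\<in>UNIV. std_normal_distribution)"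

lemma sgld_space_eq: "sgld_space \<alpha> n = measure_pmf (pmf_of_set {p. p permutes {..<n}}) \<Otimes>\<^sub>M sgld_noise \<alpha>"
  by (simp add: sgld_space_def sgld_noise_def)

lemma pair_prob_space_sgld_noise:
  assumes "\<alpha> > 0"
  shows "pair_prob_space (density lborel (normal_density 0 (sqrt (1 / \<alpha>)))) (\<Pi>\<^sub>M i\<in>(UNIV :: nat set). std_normal_distribution)"
proof -
  interpret S: product_prob_space "\<lambda>_. std_normal_distribution" "UNIV :: nat set"
    by (rule product_prob_space_std_normal)
  interpret M0: prob_space "density lborel (normal_density 0 (sqrt (1 / \<alpha>)))"
    using assms by (simp add: prob_space_normal_density)
  show ?thesis by unfold_locales
qed

lemma prob_space_sgld_noise:
  assumes "\<alpha> > 0"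
  shows "prob_space (sgld_noise \<alpha>)"
proof -
  interpret pair_prob_space "density lborel (normal_density 0 (sqrt (1 / \<alpha>)))"
      "\<Pi>\<^sub>M i\<in>(UNIV :: nat set). std_normal_distribution"
    using assms by (rule pair_prob_space_sgld_noise)
  show ?thesis unfolding sgld_noise_def by (rule P.prob_space_axioms)
qed

lemma distributed_sgld_noise_linear:
  assumes "\<alpha> > 0" "p \<noteq> 0" "\<And>i. i < T \<Longrightarrow> w i \<noteq> 0"
  shows "distributed (sgld_noise \<alpha>) lborel (\<lambda>z. p * fst z + (\<Sum>i<T. w i * snd z i))
           (normal_density 0 (sqrt (p\<^sup>2 / \<alpha> + (\<Sum>i<T. (w i)\<^sup>2))))"
proof -
  interpret N: pair_prob_space "density lborel (normal_density 0 (sqrt (1 / \<alpha>)))"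
      "\<Pi>\<^sub>M i\<in>(UNIV :: nat set). std_normal_distribution"
    using assms(1) by (rule pair_prob_space_sgld_noise)
  let ?N = "sgld_noise \<alpha>"
  have "distributed ?N lborel fst (normal_density 0 (sqrt (1 / \<alpha>)))"
    using N.M2.distr_pair_fst[of "density lborel (normal_density 0 (sqrt (1 / \<alpha>)))"]
    by (auto simp: distributed_def sgld_noise_def cong: distr_cong)
  from N.normal_density_affine[OF this[unfolded sgld_noise_def], of p 0]
  have fst: "distributed ?N lborel (\<lambda>z. p * fst z) (normal_density 0 (sqrt (p\<^sup>2 / \<alpha>)))"
    using assms by (simp add: sgld_noise_def real_sqrt_mult real_sqrt_divide)
  show ?thesis
  proof (cases "T = 0")
    case True
    then show ?thesis using fst by simp
  next
    case False
    have sum: "distributed ?N lborel (\<lambda>z. \<Sum>i<T. w i * snd z i) (normal_density 0 (sqrt (\<Sum>i<T. (w i)\<^sup>2)))"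
    proof -
      have "distr ?N lborel (\<lambda>z. \<Sum>i<T. w i * snd z i) =
            distr (distr ?N (\<Pi>\<^sub>M i\<in>UNIV. std_normal_distribution) snd) lborel (\<lambda>\<omega>. \<Sum>i<T. w i * \<omega> i)"
        by (subst distr_distr) (auto simp: sgld_noise_def comp_def)
      then show ?thesis
        using distributed_weighted_sum_std_normal[of "{..<T}" w] False assms(3)
        by (auto simp: distributed_def sgld_noise_def N.distr_pair_snd)
    qed
    have indep: "N.indep_var borel (\<lambda>z. p * fst z) borel (\<lambda>z. \<Sum>i<T. w i * snd z i)"
      by (rule N.indep_var_compose_fst_snd) auto
    have "distributed ?N lborel (\<lambda>z. p * fst z + (\<Sum>i<T. w i * snd z i))
        (normal_density (0 + 0) (sqrt ((sqrt (p\<^sup>2 / \<alpha>))\<^sup>2 + (sqrt (\<Sum>i<T. (w i)\<^sup>2))\<^sup>2)))"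
      using fst sum unfolding sgld_noise_def
      by (rule N.add_indep_normal[OF indep, rotated 2]) (use assms False in \<open>auto intro!: sum_pos\<close>)
    then show ?thesis using assms(1) by (simp add: sum_nonneg)
  qed
qed

definition sgld_factor :: "real \<Rightarrow> real \<Rightarrow> real \<Rightarrow> (real \<times> real) list \<Rightarrow> (nat \<Rightarrow> nat) \<Rightarrow> nat \<Rightarrow> real" where
  "sgld_factor \<alpha> \<beta> \<eta> D \<sigma> j = 1 - \<eta> / 2 * (\<alpha> + real (length D) * \<beta> * (fst (D ! \<sigma> (j mod length D)))\<^sup>2)"

definition sgld_shift :: "real \<Rightarrow> real \<Rightarrow> real \<Rightarrow> (real \<times> real) list \<Rightarrow> (nat \<Rightarrow> nat) \<Rightarrow> nat \<Rightarrow> real" where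
  "sgld_shift \<alpha> \<beta> \<eta> D \<sigma> j =
     \<eta> / 2 * real (length D) * \<beta> * snd (D ! \<sigma> (j mod length D)) * fst (D ! \<sigma> (j mod length D))"

fun affine_mean :: "(nat \<Rightarrow> real) \<Rightarrow> (nat \<Rightarrow> real) \<Rightarrow> nat \<Rightarrow> real" where
  "affine_mean a b 0 = 0"
| "affine_mean a b (Suc j) = a j * affine_mean a b j + b j"

fun noise_weight :: "(nat \<Rightarrow> real) \<Rightarrow> real \<Rightarrow> nat \<Rightarrow> nat \<Rightarrow> real" where
  "noise_weight a s 0 i = 0"
| "noise_weight a s (Suc j) i = (if i = j then s else a j * noise_weight a s j i)"

fun noise_variance :: "(nat \<Rightarrow> real) \<Rightarrow> real \<Rightarrow> nat \<Rightarrow> real" where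
  "noise_variance a s 0 = 0"
| "noise_variance a s (Suc j) = (a j)\<^sup>2 * noise_variance a s j + s\<^sup>2"

lemma sum_noise_weight_squared: "(\<Sum>i<j. (noise_weight a s j i)\<^sup>2) = noise_variance a s j"
  by (induction j) (simp_all add: power_mult_distrib flip: sum_distrib_left)

lemma noise_variance_nonneg: "0 \<le> noise_variance a s j"
  by (induction j) simp_all

lemma noise_weight_nonzero: "s \<noteq> 0 \<Longrightarrow> (\<And>j. a j \<noteq> 0) \<Longrightarrow> i < j \<Longrightarrow> noise_weight a s j i \<noteq> 0"
  by (induction j) (auto simp: less_Suc_eq)

lemma affine_mean_const: "affine_mean (\<lambda>_. l) (\<lambda>_. b) j * (1 - l) = b * (1 - l ^ j)"
proof (induction j)
  case (Suc j)
  have "affine_mean (\<lambda>_. l) (\<lambda>_. b) (Suc j) * (1 - l) = l * (affine_mean (\<lambda>_. l) (\<lambda>_. b) j * (1 - l)) + b * (1 - l)"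
    by (simp add: algebra_simps)
  then show ?case unfolding Suc.IH by (simp add: algebra_simps)
qed simp

lemma affine_mean_diff:
  "affine_mean a b j - affine_mean a' b' j =
     affine_mean a' (\<lambda>i. (a i - a' i) * affine_mean a b i + b i - b' i) j"
  by (induction j) (simp_all add: algebra_simps)

lemma affine_mean_nonneg: "(\<And>i. 0 \<le> a i) \<Longrightarrow> (\<And>i. 0 \<le> b i) \<Longrightarrow> 0 \<le> affine_mean a b j"
  by (induction j) simp_all

lemma affine_mean_ge_term:
  assumes a: "\<And>i. 0 \<le> a i" and b: "\<And>i. 0 \<le> b i" and "j < T"
  shows "b j * (\<Prod>i\<in>{Suc j..<T}. a i) \<le> affine_mean a b T"
  using \<open>j < T\<close>
proof (induction T)
  case (Suc m)
  show ?case
  proof (cases "j = m")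
    case True
    then show ?thesis using a b affine_mean_nonneg[of a b j] by simp
  next
    case False
    then have "j < m" using Suc.prems by simp
    then have "b j * (\<Prod>i\<in>{Suc j..<Suc m}. a i) = a m * (b j * (\<Prod>i\<in>{Suc j..<m}. a i))"
      by (simp add: prod.atLeastLessThan_Suc)
    also have "\<dots> \<le> a m * affine_mean a b m"
      using Suc.IH \<open>j < m\<close> a by (simp add: mult_left_mono)
    also have "\<dots> \<le> affine_mean a b (Suc m)" using b[of m] by simp
    finally show ?thesis .
  qed
qed simp

lemma affine_mean_ge_term_bounds:
  assumes a: "\<And>i. l \<le> a i" "\<And>i. a i \<le> 1" and "0 \<le> l" and b: "\<And>i. 0 \<le> b i" and "j < T"
  shows "b j * (\<Prod>i<T. a i) \<le> affine_mean a b T"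
    and "b j * l ^ (T - Suc j) \<le> affine_mean a b T"
proof -
  have a0: "0 \<le> a i" for i using a(1) \<open>0 \<le> l\<close> order_trans by blast
  have "(\<Prod>i<T. a i) = (\<Prod>i<Suc j. a i) * (\<Prod>i\<in>{Suc j..<T}. a i)"
    using \<open>j < T\<close> by (metis Suc_leI atLeast0LessThan prod.atLeastLessThan_concat zero_le)
  moreover have "(\<Prod>i<Suc j. a i) \<le> 1" using a0 a(2) by (intro prod_le_1) auto
  ultimately have "(\<Prod>i<T. a i) \<le> (\<Prod>i\<in>{Suc j..<T}. a i)"
    using a0 by (simp add: mult_left_le_one_le prod_nonneg)
  moreover have "b j * (\<Prod>i\<in>{Suc j..<T}. a i) \<le> affine_mean a b T"
    using a0 b \<open>j < T\<close> by (rule affine_mean_ge_term)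
  moreover have "l ^ (T - Suc j) \<le> (\<Prod>i\<in>{Suc j..<T}. a i)"
    using prod_mono[of "{Suc j..<T}" "\<lambda>_. l" a] a(1) \<open>0 \<le> l\<close> by simp
  ultimately show "b j * (\<Prod>i<T. a i) \<le> affine_mean a b T" "b j * l ^ (T - Suc j) \<le> affine_mean a b T"
    using b[of j] by (meson mult_left_mono order_trans)+
qed

lemma noise_variance_le:
  assumes "\<And>j. 0 \<le> a j" "\<And>j. a j \<le> K" "K < 1"
  shows "noise_variance a s j \<le> s\<^sup>2 / (1 - K\<^sup>2)"
proof (induction j)
  have K: "0 \<le> K" "K\<^sup>2 < 1"
    using assms order_trans[OF assms(1,2)] power_strict_mono[of K 1 2] by auto
  {
    case 0
    show ?case using K by simp
  next
    case (Suc j)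
    have "(a j)\<^sup>2 \<le> K\<^sup>2" using assms(1,2) by (simp add: power_mono)
    then have "(a j)\<^sup>2 * noise_variance a s j \<le> K\<^sup>2 * (s\<^sup>2 / (1 - K\<^sup>2))"
      using Suc.IH noise_variance_nonneg K by (intro mult_mono) auto
    then show ?case using K by (simp add: field_simps)
  }
qed

lemma sgld_iter_Suc:
  "sgld_iter \<alpha> \<beta> \<eta> D \<sigma> x0 \<xi> (Suc j) =
     sgld_factor \<alpha> \<beta> \<eta> D \<sigma> j * sgld_iter \<alpha> \<beta> \<eta> D \<sigma> x0 \<xi> j + sgld_shift \<alpha> \<beta> \<eta> D \<sigma> j + sqrt \<eta> * \<xi> j"
  by (simp add: sgld_step_def sgld_factor_def sgld_shift_def power2_eq_square algebra_simps)

lemma sgld_iter_closed_form: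
  fixes \<alpha> \<beta> \<eta> :: real and D :: "(real \<times> real) list" and \<sigma> :: "nat \<Rightarrow> nat"
  defines "a \<equiv> sgld_factor \<alpha> \<beta> \<eta> D \<sigma>" and "b \<equiv> sgld_shift \<alpha> \<beta> \<eta> D \<sigma>"
  shows "sgld_iter \<alpha> \<beta> \<eta> D \<sigma> x0 \<xi> j =
           affine_mean a b j + (\<Prod>i<j. a i) * x0 + (\<Sum>i<j. noise_weight a (sqrt \<eta>) j i * \<xi> i)"
proof (induction j)
  case (Suc j)
  have "(\<Sum>i<Suc j. noise_weight a (sqrt \<eta>) (Suc j) i * \<xi> i) =
        sqrt \<eta> * \<xi> j + a j * (\<Sum>i<j. noise_weight a (sqrt \<eta>) j i * \<xi> i)"
    by (simp add: sum_distrib_left mult.assoc)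
  with Suc show ?case
    by (simp add: sgld_iter_Suc algebra_simps del: sgld_iter.simps(2) flip: a_def b_def)
qed simp

lemma distributed_sgld_iter:
  fixes \<alpha> \<beta> \<eta> :: real and D :: "(real \<times> real) list" and \<sigma> :: "nat \<Rightarrow> nat"
  defines "a \<equiv> sgld_factor \<alpha> \<beta> \<eta> D \<sigma>" and "b \<equiv> sgld_shift \<alpha> \<beta> \<eta> D \<sigma>"
  assumes "\<alpha> > 0" "\<eta> > 0" "\<And>j. a j \<noteq> 0"
  shows "distributed (sgld_noise \<alpha>) lborel (\<lambda>z. sgld_iter \<alpha> \<beta> \<eta> D \<sigma> (fst z) (snd z) T - affine_mean a b T)
           (normal_density 0 (sqrt ((\<Prod>i<T. a i)\<^sup>2 / \<alpha> + noise_variance a (sqrt \<eta>) T)))"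
proof -
  have "distributed (sgld_noise \<alpha>) lborel (\<lambda>z. (\<Prod>i<T. a i) * fst z + (\<Sum>i<T. noise_weight a (sqrt \<eta>) T i * snd z i))
          (normal_density 0 (sqrt ((\<Prod>i<T. a i)\<^sup>2 / \<alpha> + (\<Sum>i<T. (noise_weight a (sqrt \<eta>) T i)\<^sup>2))))"
    using assms by (intro distributed_sgld_noise_linear) (auto simp: noise_weight_nonzero)
  moreover have "(\<lambda>z. sgld_iter \<alpha> \<beta> \<eta> D \<sigma> (fst z) (snd z) T - affine_mean a b T) =
                 (\<lambda>z. (\<Prod>i<T. a i) * fst z + (\<Sum>i<T. noise_weight a (sqrt \<eta>) T i * snd z i))"
    by (simp add: sgld_iter_closed_form a_def b_def)
  ultimately show ?thesis
    by (simp only: sum_noise_weight_squared)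
qed

section \<open>Law of the released iterate\<close>

lemma measurable_sgld_iter:
  "(\<lambda>(\<sigma>, \<theta>0, \<xi>). sgld_iter \<alpha> \<beta> \<eta> D \<sigma> \<theta>0 \<xi> T) \<in> borel_measurable (sgld_space \<alpha> n)"
proof -
  let ?X = "sgld_space \<alpha> n"
  have [measurable]: "(\<lambda>\<omega>. f (fst \<omega>)) \<in> borel_measurable ?X" for f :: "(nat \<Rightarrow> nat) \<Rightarrow> real"
    unfolding sgld_space_def by (rule measurable_compose[OF measurable_fst]) simp
  have [measurable]: "(\<lambda>\<omega>. fst (snd \<omega>)) \<in> borel_measurable ?X"
    unfolding sgld_space_def by (rule measurable_compose[OF measurable_snd]) (simp cong: measurable_cong_sets)
  have [measurable]: "(\<lambda>\<omega>. snd (snd \<omega>) j) \<in> borel_measurable ?X" for j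
    unfolding sgld_space_def
    by (intro measurable_compose[OF measurable_snd] measurable_compose[OF measurable_snd])
      (simp cong: measurable_cong_sets)
  show ?thesis
  proof (induction T)
    case (Suc T)
    note [measurable] = Suc[unfolded split_beta']
    show ?case unfolding split_beta' by (simp add: sgld_step_def) measurable
  qed (simp add: split_beta')
qed

lemma set_pmf_of_permutations:
  "finite A \<Longrightarrow> set_pmf (pmf_of_set {\<sigma>. \<sigma> permutes A}) = {\<sigma>. \<sigma> permutes A}"
  by (rule set_pmf_of_set) (auto intro: finite_permutations permutes_id)

lemma emeasure_sgld_output_atLeast:
  assumes "\<alpha> > 0"
  shows "emeasure (sgld_output \<alpha> \<beta> \<eta> D T) {t..} =
    (\<integral>\<^sup>+\<sigma>. measure (sgld_noise \<alpha>) {z \<in> space (sgld_noise \<alpha>). t \<le> sgld_iter \<alpha> \<beta> \<eta> D \<sigma> (fst z) (snd z) T}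
       \<partial>pmf_of_set {\<sigma>. \<sigma> permutes {..<length D}})"
proof -
  let ?P = "measure_pmf (pmf_of_set {\<sigma>. \<sigma> permutes {..<length D}})"
  let ?F = "\<lambda>(\<sigma>, \<theta>0, \<xi>). sgld_iter \<alpha> \<beta> \<eta> D \<sigma> \<theta>0 \<xi> T"
  let ?S = "sgld_space \<alpha> (length D)"
  interpret N: prob_space "sgld_noise \<alpha>" using assms by (rule prob_space_sgld_noise)
  have "emeasure (sgld_output \<alpha> \<beta> \<eta> D T) {t..} = emeasure ?S (?F -` {t..} \<inter> space ?S)"
    unfolding sgld_output_def by (rule emeasure_distr[OF measurable_sgld_iter]) simp
  also have "\<dots> = (\<integral>\<^sup>+\<sigma>. emeasure (sgld_noise \<alpha>) (Pair \<sigma> -` (?F -` {t..} \<inter> space ?S)) \<partial>?P)"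
    using measurable_sets[OF measurable_sgld_iter, of "{t..}"] unfolding sgld_space_eq
    by (intro N.emeasure_pair_measure_alt) auto
  also have "\<dots> = (\<integral>\<^sup>+\<sigma>. measure (sgld_noise \<alpha>) {z \<in> space (sgld_noise \<alpha>). t \<le> sgld_iter \<alpha> \<beta> \<eta> D \<sigma> (fst z) (snd z) T} \<partial>?P)"
    by (intro nn_integral_cong)
      (auto simp: N.emeasure_eq_measure sgld_space_eq space_pair_measure intro!: arg_cong[where f = "measure _"])
  finally show ?thesis .
qed

lemma prob_space_sgld_output: "\<alpha> > 0 \<Longrightarrow> prob_space (sgld_output \<alpha> \<beta> \<eta> D T)"
  unfolding sgld_output_def sgld_space_eq
  by (intro prob_space.prob_space_distr prob_space_pair prob_space_measure_pmf prob_space_sgld_noise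
      measurable_sgld_iter[unfolded sgld_space_eq])

lemma measure_sgld_output_atLeast_ge:
  assumes "\<alpha> > 0" "0 \<le> l"
    and "\<And>\<sigma>. \<sigma> permutes {..<length D} \<Longrightarrow>
           l \<le> measure (sgld_noise \<alpha>) {z \<in> space (sgld_noise \<alpha>). t \<le> sgld_iter \<alpha> \<beta> \<eta> D \<sigma> (fst z) (snd z) T}"
  shows "l \<le> measure (sgld_output \<alpha> \<beta> \<eta> D T) {t..}"
proof -
  interpret O: prob_space "sgld_output \<alpha> \<beta> \<eta> D T" using assms(1) by (rule prob_space_sgld_output)
  have "ennreal l \<le> emeasure (sgld_output \<alpha> \<beta> \<eta> D T) {t..}"
    unfolding emeasure_sgld_output_atLeast[OF assms(1)]
    using assms(3) by (intro measure_pmf.nn_integral_ge_const) (auto simp: AE_measure_pmf_iff set_pmf_of_permutations)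
  then show ?thesis using assms(2) by (simp add: O.emeasure_eq_measure)
qed

lemma measure_sgld_output_atLeast_le:
  assumes "\<alpha> > 0" "0 \<le> u"
    and "\<And>\<sigma>. \<sigma> permutes {..<length D} \<Longrightarrow>
           measure (sgld_noise \<alpha>) {z \<in> space (sgld_noise \<alpha>). t \<le> sgld_iter \<alpha> \<beta> \<eta> D \<sigma> (fst z) (snd z) T} \<le> u"
  shows "measure (sgld_output \<alpha> \<beta> \<eta> D T) {t..} \<le> u"
proof -
  interpret O: prob_space "sgld_output \<alpha> \<beta> \<eta> D T" using assms(1) by (rule prob_space_sgld_output)
  have "emeasure (sgld_output \<alpha> \<beta> \<eta> D T) {t..} \<le> ennreal u"
    unfolding emeasure_sgld_output_atLeast[OF assms(1)]
    using assms(2,3) by (intro measure_pmf.nn_integral_le_const) (auto simp: AE_measure_pmf_iff set_pmf_of_permutations)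
  then show ?thesis using assms(2) by (simp add: O.emeasure_eq_measure)
qed

lemma permutes_mod_less: "\<sigma> permutes {..<n} \<Longrightarrow> 0 < n \<Longrightarrow> \<sigma> (j mod n) < (n :: nat)"
  by (metis lessThan_iff mod_less_divisor permutes_in_image)

lemma permutes_obtain_last:
  fixes n :: nat
  assumes "\<sigma> permutes {..<n}" "0 < n"
  obtains p where "p < n" "\<sigma> p = n - 1"
proof
  have "n - 1 < n" using assms(2) by arith
  then show "inv \<sigma> (n - 1) < n"
    using permutes_in_image[OF permutes_inv[OF assms(1)], of "n - 1"] by simp
  show "\<sigma> (inv \<sigma> (n - 1)) = n - 1"
    using permutes_inverses(1)[OF assms(1)] by simp
qed

lemma nth_replicate_snoc_permutes:
  assumes \<sigma>: "\<sigma> permutes {..<n}" "0 < n" and p: "\<sigma> p = n - 1"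
  shows "(replicate (n - 1) r @ [r']) ! \<sigma> (j mod n) = (if j mod n = p then r' else r)"
proof -
  have "\<sigma> (j mod n) = n - 1 \<longleftrightarrow> j mod n = p"
    using p injD[OF permutes_inj[OF \<sigma>(1)]] by metis
  moreover have "\<sigma> (j mod n) < n" using \<sigma> by (rule permutes_mod_less)
  ultimately consider "j mod n = p" "\<sigma> (j mod n) = n - 1" | "j mod n \<noteq> p" "\<sigma> (j mod n) < n - 1"
    by linarith
  then show ?thesis
    by cases (simp_all add: nth_append)
qed

lemma measure_sgld_output_replicate_ge_half:
  fixes \<alpha> \<beta> \<eta> x y :: real and n T :: nat
  defines "a \<equiv> 1 - \<eta> / 2 * (\<alpha> + real n * \<beta> * x\<^sup>2)" and "b \<equiv> \<eta> / 2 * real n * \<beta> * y * x"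
  assumes "\<alpha> > 0" "\<eta> > 0" "0 < n" "a \<noteq> 0"
  shows "1 / 2 \<le> measure (sgld_output \<alpha> \<beta> \<eta> (replicate n (x, y)) T) {affine_mean (\<lambda>_. a) (\<lambda>_. b) T..}"
proof (rule measure_sgld_output_atLeast_ge)
  interpret N: prob_space "sgld_noise \<alpha>" using assms(3) by (rule prob_space_sgld_noise)
  fix \<sigma> assume "\<sigma> permutes {..<length (replicate n (x, y))}"
  then have coef: "sgld_factor \<alpha> \<beta> \<eta> (replicate n (x, y)) \<sigma> = (\<lambda>_. a)"
    "sgld_shift \<alpha> \<beta> \<eta> (replicate n (x, y)) \<sigma> = (\<lambda>_. b)"
    using permutes_mod_less[of \<sigma> n] assms(5) by (auto simp: sgld_factor_def sgld_shift_def a_def b_def)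
  have "0 < sqrt ((\<Prod>i<T. a)\<^sup>2 / \<alpha> + noise_variance (\<lambda>_. a) (sqrt \<eta>) T)"
    using assms(3,6) noise_variance_nonneg by (simp add: add_pos_nonneg)
  from N.prob_normal_nonneg_ge_half[OF distributed_sgld_iter[of \<alpha> \<eta> \<beta> "replicate n (x, y)" \<sigma> T, unfolded coef] this]
  have "1 / 2 \<le> N.prob {z \<in> space (sgld_noise \<alpha>).
      0 \<le> sgld_iter \<alpha> \<beta> \<eta> (replicate n (x, y)) \<sigma> (fst z) (snd z) T - affine_mean (\<lambda>_. a) (\<lambda>_. b) T}"
    using assms(3,4,6) by simp
  then show "1 / 2 \<le> N.prob {z \<in> space (sgld_noise \<alpha>).
      affine_mean (\<lambda>_. a) (\<lambda>_. b) T \<le> sgld_iter \<alpha> \<beta> \<eta> (replicate n (x, y)) \<sigma> (fst z) (snd z) T}"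
    by simp
qed (use assms in simp_all)

lemma measure_sgld_output_replicate_rescaled_ge_half:
  fixes \<alpha> \<beta> \<eta> x c A s :: real and n T :: nat
  assumes "1 < A" "s < 1" "0 < n"
    and \<alpha>: "\<alpha> = (1 - s) * A" and x: "real n * \<beta> * x\<^sup>2 = s * A" and \<eta>: "\<eta> = 2 / A\<^sup>2"
  shows "1 / 2 \<le> measure (sgld_output \<alpha> \<beta> \<eta> (replicate n (x, c * x)) T)
                      {affine_mean (\<lambda>_. 1 - 1 / A) (\<lambda>_. c * s / A) T..}"
proof -
  have "1 - \<eta> / 2 * (\<alpha> + real n * \<beta> * x\<^sup>2) = 1 - 1 / A"
    unfolding x \<alpha> \<eta> using assms(1) by (simp add: power2_eq_square field_simps)
  moreover have "\<eta> / 2 * real n * \<beta> * (c * x) * x = c * s / A"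
  proof -
    have "\<eta> / 2 * real n * \<beta> * (c * x) * x = \<eta> / 2 * c * (real n * \<beta> * x\<^sup>2)"
      by (simp add: power2_eq_square mult_ac)
    then show ?thesis unfolding x \<eta> using assms(1) by (simp add: power2_eq_square field_simps)
  qed
  ultimately show ?thesis
    using measure_sgld_output_replicate_ge_half[of \<alpha> \<eta> n \<beta> x "c * x" T] assms by simp
qed

section \<open>The mean gap on the neighbouring database\<close>

(* The coefficients sgld_factor and sgld_shift on D2, in the rescaled parameters, for a shuffle
   that puts the halved record at position p of every pass. *)
definition neighbour_factor :: "real \<Rightarrow> real \<Rightarrow> nat \<Rightarrow> nat \<Rightarrow> nat \<Rightarrow> real" where
  "neighbour_factor A s n p j = (if j mod n = p then 1 - (1 - 3 * s / 4) / A else 1 - 1 / A)"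

definition neighbour_shift :: "real \<Rightarrow> real \<Rightarrow> real \<Rightarrow> nat \<Rightarrow> nat \<Rightarrow> nat \<Rightarrow> real" where
  "neighbour_shift A s c n p j = (if j mod n = p then c * s / A / 4 else c * s / A)"

lemma neighbour_factor_bounds:
  assumes "6 < A" "1/2 < s" "s < 1"
  shows "0 < 1 - 1 / A" "1 - 1 / A \<le> neighbour_factor A s n p j"
    and "neighbour_factor A s n p j \<le> 1 - (1 - 3 * s / 4) / A" "1 - (1 - 3 * s / 4) / A < 1"
  using assms by (auto simp: neighbour_factor_def field_simps)

lemma neighbour_gap_eq:
  assumes "A \<noteq> 0"
  shows "affine_mean (\<lambda>_. 1 - 1 / A) (\<lambda>_. c * s / A) T - affine_mean (neighbour_factor A s n p) (neighbour_shift A s c n p) T =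
    affine_mean (neighbour_factor A s n p)
      (\<lambda>j. if j mod n = p then 3 / 4 * (s / A) * c * ((1 - s) + s * (1 - 1 / A) ^ j) else 0) T"
proof -
  define lam where "lam = 1 - 1 / A"
  have "affine_mean (\<lambda>_. lam) (\<lambda>_. c * s / A) j * (1 / A) = c * s / A * (1 - lam ^ j)" for j
    using affine_mean_const[of lam "c * s / A" j] assms by (simp add: lam_def)
  then have mean: "affine_mean (\<lambda>_. lam) (\<lambda>_. c * s / A) j = c * s * (1 - lam ^ j)" for j
    using assms by (simp add: field_simps)
  have factor: "neighbour_factor A s n p j = (if j mod n = p then lam + 3 * s / (4 * A) else lam)" for j
    using assms by (simp add: neighbour_factor_def lam_def field_simps)
  show ?thesis
    unfolding affine_mean_diff lam_def[symmetric]
    by (rule arg_cong[where f = "\<lambda>g. affine_mean _ g T"])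
      (use assms in \<open>auto simp: fun_eq_iff mean factor neighbour_shift_def field_simps\<close>)
qed

lemma neighbour_gap_ge:
  fixes A s c :: real and n p k :: nat
  defines "lam \<equiv> 1 - 1 / A"
  defines "d \<equiv> affine_mean (\<lambda>_. lam) (\<lambda>_. c * s / A) (k * n)
               - affine_mean (neighbour_factor A s n p) (neighbour_shift A s c n p) (k * n)"
  assumes A: "6 < A" and s: "1/2 < s" "s < 1" and c: "0 < c" and p: "p < n" and k: "1 \<le> k"
  shows "3 / 4 * (s / A) * c * ((1 - s) + s * lam ^ n) * (\<Prod>i<k * n. neighbour_factor A s n p i) \<le> d"
    and "3 / 4 * (s / A) * c * ((1 - s) + s * lam ^ (k * n)) * lam ^ n \<le> d"
proof -
  define g where "g j = (if j mod n = p then 3 / 4 * (s / A) * c * ((1 - s) + s * lam ^ j) else 0)" for j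
  have a: "0 < lam" "lam < 1" "lam \<le> neighbour_factor A s n p j" "neighbour_factor A s n p j \<le> 1" for j
    using neighbour_factor_bounds(2,3)[OF A s, of n p j] neighbour_factor_bounds(1,4)[OF A s] A
    unfolding lam_def by auto
  have d: "d = affine_mean (neighbour_factor A s n p) g (k * n)"
    using A unfolding d_def g_def lam_def by (intro neighbour_gap_eq) simp
  have g: "0 \<le> g j" for j
    using A s c a by (simp add: g_def)
  have g_ge: "3 / 4 * (s / A) * c * ((1 - s) + s * lam ^ m) \<le> g j" if "j mod n = p" "j \<le> m" for j m
  proof -
    have "lam ^ m \<le> lam ^ j" using that a by (simp add: power_decreasing)
    then have "3 / 4 * (s / A) * c * ((1 - s) + s * lam ^ m) \<le> 3 / 4 * (s / A) * c * ((1 - s) + s * lam ^ j)"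
      using A s c by (intro mult_left_mono add_left_mono) auto
    then show ?thesis using that by (simp add: g_def)
  qed
  have "p < k * n" using p k by (metis less_le_trans mult_le_mono1 mult_1)
  \<comment> \<open>first pass through the halved record\<close>
  then have "g p * (\<Prod>i<k * n. neighbour_factor A s n p i) \<le> d"
    unfolding d using a g by (intro affine_mean_ge_term_bounds(1)) (auto intro: order_trans)
  moreover have "3 / 4 * (s / A) * c * ((1 - s) + s * lam ^ n) * (\<Prod>i<k * n. neighbour_factor A s n p i)
      \<le> g p * (\<Prod>i<k * n. neighbour_factor A s n p i)"
    using p a by (intro mult_right_mono g_ge prod_nonneg) (auto intro: less_imp_le order_trans)
  ultimately show "3 / 4 * (s / A) * c * ((1 - s) + s * lam ^ n) * (\<Prod>i<k * n. neighbour_factor A s n p i) \<le> d"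
    by linarith
  \<comment> \<open>last pass through the halved record\<close>
  obtain k' where "k = Suc k'" using k by (metis Suc_le_D One_nat_def)
  define j where "j = k' * n + p"
  have j: "j mod n = p" "j < k * n" "k * n - Suc j < n"
    using p by (auto simp: j_def \<open>k = Suc k'\<close>)
  then have "g j * lam ^ (k * n - Suc j) \<le> d"
    unfolding d using a g by (intro affine_mean_ge_term_bounds(2)) (auto intro: order_trans)
  moreover have "3 / 4 * (s / A) * c * ((1 - s) + s * lam ^ (k * n)) * lam ^ n \<le> g j * lam ^ (k * n - Suc j)"
    using j g a by (intro mult_mono g_ge) (auto intro: less_imp_le power_decreasing)
  ultimately show "3 / 4 * (s / A) * c * ((1 - s) + s * lam ^ (k * n)) * lam ^ n \<le> d"
    by linarith
qed

definition gap_factor :: "real \<Rightarrow> real" where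
  "gap_factor s = s ^ 4 * (1 - 3 * s / 4) * ((1 - s) + 4 / 9 * (s\<^sup>2 / (2 - s)))"

lemma gap_factor_ge_interval:
  fixes a b s :: real
  assumes "0 \<le> a" "a \<le> s" "s \<le> b" "b \<le> 1"
  shows "a ^ 4 * (1 - 3 * b / 4) * ((1 - b) + 4 / 9 * (a\<^sup>2 / (2 - a))) \<le> gap_factor s"
proof -
  have "a\<^sup>2 / (2 - a) \<le> s\<^sup>2 / (2 - s)"
    using assms by (intro frac_le power_mono) auto
  then have last: "(1 - b) + 4 / 9 * (a\<^sup>2 / (2 - a)) \<le> (1 - s) + 4 / 9 * (s\<^sup>2 / (2 - s))"
    using assms by linarith
  have "a ^ 4 * (1 - 3 * b / 4) \<le> s ^ 4 * (1 - 3 * s / 4)"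
    using assms by (intro mult_mono power_mono) auto
  then show ?thesis
    unfolding gap_factor_def using last assms by (intro mult_mono add_nonneg_nonneg) auto
qed

lemma gap_factor_ge:
  fixes s :: real
  assumes "1/2 \<le> s" "s \<le> 1"
  shows "9 / 572 \<le> gap_factor s"
proof -
  have bound: "9 / 572 \<le> gap_factor s"
    if "0 \<le> a" "a \<le> s" "s \<le> b" "b \<le> 1"
      and "9 / 572 \<le> a ^ 4 * (1 - 3 * b / 4) * ((1 - b) + 4 / 9 * (a\<^sup>2 / (2 - a)))" for a b :: real
    using gap_factor_ge_interval[OF that(1-4)] that(5) by linarith
  consider "s \<le> 3/5" | "3/5 \<le> s" "s \<le> 7/10" | "7/10 \<le> s" "s \<le> 4/5" | "4/5 \<le> s" "s \<le> 9/10" | "9/10 \<le> s"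
    by linarith
  then show ?thesis
  proof cases
    case 1
    then show ?thesis using assms by (intro bound[of "1/2" "3/5"]) (simp_all add: eval_nat_numeral)
  next
    case 2
    then show ?thesis by (intro bound[of "3/5" "7/10"]) (simp_all add: eval_nat_numeral)
  next
    case 3
    then show ?thesis by (intro bound[of "7/10" "4/5"]) (simp_all add: eval_nat_numeral)
  next
    case 4
    then show ?thesis by (intro bound[of "4/5" "9/10"]) (simp_all add: eval_nat_numeral)
  next
    case 5
    then show ?thesis using assms by (intro bound[of "9/10" 1]) (simp_all add: eval_nat_numeral)
  qed
qed

lemma first_gap_square_bound:
  fixes s L U P d :: real
  assumes s: "1/2 < s" "s < 1" and L: "2/3 \<le> L" "L \<le> 1" and "0 < U" "0 < P"
    and d: "3/4 * s * U * ((1 - s) + s * L) * P \<le> d"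
  shows "3 * U\<^sup>2 * P\<^sup>2 / (1024 * s\<^sup>2) \<le> 3 / 16 * d\<^sup>2"
proof -
  have "L \<le> (1 - s) + s * L" using mult_nonneg_nonneg[of "1 - s" "1 - L"] s L by (simp add: algebra_simps)
  then have "1/2 * (s * U * P) \<le> 3/4 * ((1 - s) + s * L) * (s * U * P)"
    using s L \<open>0 < U\<close> \<open>0 < P\<close> by (intro mult_right_mono) auto
  moreover have "3/4 * ((1 - s) + s * L) * (s * U * P) = 3/4 * s * U * ((1 - s) + s * L) * P"
    by (simp add: mult_ac)
  ultimately have "1/2 * (s * U * P) \<le> d" using d by linarith
  moreover have "0 \<le> 1/2 * (s * U * P)" using s \<open>0 < U\<close> \<open>0 < P\<close> by simp
  ultimately have "(1/2 * (s * U * P))\<^sup>2 \<le> d\<^sup>2" by (rule power_mono)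
  moreover have "3 * U\<^sup>2 * P\<^sup>2 / (1024 * s\<^sup>2) = 3 / 16 * (1/2 * (s * U * P))\<^sup>2 / (16 * s ^ 4)"
    using s by (simp add: field_simps power2_eq_square eval_nat_numeral)
  moreover have "(1 / 2) ^ 4 \<le> s ^ 4" using s by (intro power_mono) auto
  then have "3 / 16 * (1/2 * (s * U * P))\<^sup>2 / (16 * s ^ 4) \<le> 3 / 16 * (1/2 * (s * U * P))\<^sup>2 / 1"
    by (intro divide_left_mono) (auto simp: eval_nat_numeral)
  ultimately show ?thesis by linarith
qed

lemma gap_weight_square_ge:
  fixes s L w :: real
  assumes s: "1/2 < s" "s < 1" and L: "2/3 \<le> L" and w: "0 \<le> w" "w\<^sup>2 = (1 - s) / (2 - s)"
  shows "4 / 9 * ((1 - s) * ((1 - s) + 4 / 9 * (s\<^sup>2 / (2 - s)))) \<le> ((1 - s) + s * w * L)\<^sup>2 * L\<^sup>2"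
proof -
  have L2: "4/9 \<le> L\<^sup>2" using power_mono[OF L, of 2] by (simp add: power2_eq_square)
  have "((1 - s) + s * w * L)\<^sup>2 = (1 - s)\<^sup>2 + 2 * ((1 - s) * s * w * L) + s\<^sup>2 * L\<^sup>2 * w\<^sup>2"
    by (simp add: power2_eq_square algebra_simps)
  moreover have "0 \<le> (1 - s) * s * w * L" using s w L by simp
  moreover have "s\<^sup>2 * (4/9) * w\<^sup>2 \<le> s\<^sup>2 * L\<^sup>2 * w\<^sup>2" using L2 by (intro mult_right_mono mult_left_mono) auto
  moreover have "s\<^sup>2 * (4/9) * w\<^sup>2 = (1 - s) * (4 / 9 * (s\<^sup>2 / (2 - s)))" using s by (simp add: w(2) field_simps)
  moreover have "(1 - s) * ((1 - s) + 4 / 9 * (s\<^sup>2 / (2 - s))) = (1 - s)\<^sup>2 + (1 - s) * (4 / 9 * (s\<^sup>2 / (2 - s)))"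
    by (simp add: power2_eq_square algebra_simps)
  ultimately have "(1 - s) * ((1 - s) + 4 / 9 * (s\<^sup>2 / (2 - s))) \<le> ((1 - s) + s * w * L)\<^sup>2"
    by linarith
  then have "(1 - s) * ((1 - s) + 4 / 9 * (s\<^sup>2 / (2 - s))) * (4 / 9) \<le> ((1 - s) + s * w * L)\<^sup>2 * L\<^sup>2"
    using L2 s by (intro mult_mono) auto
  then show ?thesis by (simp only: mult.commute)
qed

lemma last_gap_square_bound:
  fixes s L U w d :: real
  assumes s: "1/2 < s" "s < 1" and L: "2/3 \<le> L" and w: "0 \<le> w" "w\<^sup>2 = (1 - s) / (2 - s)"
    and "0 \<le> U" and d: "3/4 * s * U * ((1 - s) + s * w * L) * L \<le> d"
  shows "36 * (1 - s) * U\<^sup>2 / (11264 * s\<^sup>2 * (1 - 3 * s / 4)) \<le> 13 / 16 * d\<^sup>2"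
proof -
  define G where "G = (1 - s) + 4 / 9 * (s\<^sup>2 / (2 - s))"
  define e where "e = 3/4 * s * U"
  define q where "q = ((1 - s) + s * w * L) * L"
  have factor: "36 / (11264 * s\<^sup>2 * (1 - 3 * s / 4)) \<le> 13 / 64 * s\<^sup>2 * G"
    using gap_factor_ge[of s] s by (simp add: gap_factor_def G_def field_simps eval_nat_numeral)
  have "36 * (1 - s) * U\<^sup>2 / (11264 * s\<^sup>2 * (1 - 3 * s / 4)) = 36 / (11264 * s\<^sup>2 * (1 - 3 * s / 4)) * ((1 - s) * U\<^sup>2)"
    by (simp only: times_divide_eq_left mult.assoc)
  also have "\<dots> \<le> 13 / 64 * s\<^sup>2 * G * ((1 - s) * U\<^sup>2)"
    using factor s by (intro mult_right_mono) auto
  also have "\<dots> = 13 / 16 * (e\<^sup>2 * (4 / 9 * ((1 - s) * G)))"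
    unfolding e_def by (simp add: power2_eq_square field_simps)
  also have "\<dots> \<le> 13 / 16 * (e\<^sup>2 * q\<^sup>2)"
    using gap_weight_square_ge[OF s L w] by (intro mult_left_mono) (auto simp: G_def q_def power_mult_distrib)
  also have "\<dots> \<le> 13 / 16 * d\<^sup>2"
  proof -
    have "0 \<le> e * q" using s w L \<open>0 \<le> U\<close> by (simp add: e_def q_def)
    moreover have "e * q \<le> d" using d by (simp add: e_def q_def mult.assoc)
    ultimately show ?thesis by (metis power_mono power_mult_distrib mult_left_mono zero_le_divide_iff zero_le_numeral)
  qed
  finally show ?thesis .
qed

lemma stationary_variance_le:
  fixes A s :: real
  assumes A: "A > 6" and s: "1/2 < s" "s < 1"
  shows "(2 / A\<^sup>2) / (1 - (1 - (1 - 3 * s / 4) / A)\<^sup>2) \<le> 12 / (11 * A * (1 - 3 * s / 4))"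
proof -
  define g where "g = (1 - 3 * s / 4) / A"
  have g0: "0 < g" using A s by (simp add: g_def)
  have g1: "g \<le> 1 / 6"
  proof -
    have "(1 - 3 * s / 4) / A \<le> 1 / A" using A s by (intro divide_right_mono) auto
    also have "\<dots> \<le> 1 / 6" using A by (simp add: field_simps)
    finally show ?thesis by (simp add: g_def)
  qed
  have e: "1 - (1 - g)\<^sup>2 = g * (2 - g)" by (simp add: power2_eq_square algebra_simps)
  have low: "g * (11 / 6) \<le> g * (2 - g)" using g0 g1 by (intro mult_left_mono) auto
  have pos: "0 < g * (11 / 6)" using g0 by simp
  have "(2 / A\<^sup>2) / (g * (2 - g)) \<le> (2 / A\<^sup>2) / (g * (11 / 6))"
    using low pos A by (intro divide_left_mono) auto
  also have "\<dots> = 12 / (11 * A * (1 - 3 * s / 4))"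
    using A s by (simp add: g_def field_simps power2_eq_square)
  finally show ?thesis unfolding g_def[symmetric] e .
qed

(* The first pass through the halved record pays for the variance of the initial point, the last
   pass for the accumulated step noise; d^2 is split between them as 3/16 + 13/16. *)
lemma gap_square_dominates_variance:
  fixes A s c L w P d V :: real
  assumes A: "A > 6" and s: "1/2 < s" "s < 1" and c: "c > 0" and L: "2/3 \<le> L" "L \<le> 1"
    and w: "w \<ge> 0" "w\<^sup>2 = (1 - s) / (2 - s)" and P: "P > 0"
    and d1: "d \<ge> 3/4 * (s/A) * c * ((1 - s) + s * L) * P"
    and d2: "d \<ge> 3/4 * (s/A) * c * ((1 - s) + s * w * L) * L"
    and nv: "0 \<le> V" "V \<le> (2 / A\<^sup>2) / (1 - (1 - (1 - 3 * s / 4) / A)\<^sup>2)"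
  shows "2 * (3 * ((1 - s) * A) * c\<^sup>2 / (2048 * (s * A)\<^sup>2)) * (P\<^sup>2 / ((1 - s) * A) + V) \<le> d\<^sup>2"
proof -
  define U where "U = c / A"
  have U0: "U > 0" using c A by (simp add: U_def)
  have cU: "3/4 * (s/A) * c = 3/4 * s * U" by (simp add: U_def)
  have i1: "3 * U\<^sup>2 * P\<^sup>2 / (1024 * s\<^sup>2) \<le> 3 / 16 * d\<^sup>2"
    by (rule first_gap_square_bound[OF s L U0 P]) (rule d1[unfolded cU])
  have i2: "36 * (1 - s) * U\<^sup>2 / (11264 * s\<^sup>2 * (1 - 3 * s / 4)) \<le> 13 / 16 * d\<^sup>2"
    by (rule last_gap_square_bound[OF s L(1) w less_imp_le[OF U0]]) (rule d2[unfolded cU])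
  define K2 where "K2 = 2 * (3 * ((1 - s) * A) * c\<^sup>2 / (2048 * (s * A)\<^sup>2))"
  have K20: "0 \<le> K2" using s A by (simp add: K2_def)
  have e1: "K2 * (P\<^sup>2 / ((1 - s) * A)) = 3 * U\<^sup>2 * P\<^sup>2 / (1024 * s\<^sup>2)"
    using A s by (simp add: K2_def U_def field_simps power2_eq_square)
  have "K2 * V \<le> K2 * (12 / (11 * A * (1 - 3 * s / 4)))"
    using nv stationary_variance_le[OF A s] K20 by (intro mult_left_mono) auto
  also have "\<dots> = 36 * (1 - s) * U\<^sup>2 / (11264 * s\<^sup>2 * (1 - 3 * s / 4))"
    using A s by (simp add: K2_def U_def field_simps power2_eq_square)
  finally have e2: "K2 * V \<le> 36 * (1 - s) * U\<^sup>2 / (11264 * s\<^sup>2 * (1 - 3 * s / 4))" .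
  have "K2 * (P\<^sup>2 / ((1 - s) * A) + V) = K2 * (P\<^sup>2 / ((1 - s) * A)) + K2 * V"
    by (simp add: distrib_left)
  also have "\<dots> \<le> 3 / 16 * d\<^sup>2 + 13 / 16 * d\<^sup>2" using e1 e2 i1 i2 by linarith
  finally show ?thesis by (simp add: K2_def)
qed

lemma neighbour_gap_dominates_variance:
  fixes A s c :: real and n p k :: nat
  defines "lam \<equiv> 1 - 1 / A" and "a \<equiv> neighbour_factor A s n p"
  defines "d \<equiv> affine_mean (\<lambda>_. lam) (\<lambda>_. c * s / A) (k * n) - affine_mean a (neighbour_shift A s c n p) (k * n)"
  assumes A: "6 < A" and s: "1/2 < s" "s < 1" and c: "0 < c" and p: "p < n" and k: "1 \<le> k"
    and L: "2/3 \<le> lam ^ n" and last: "sqrt ((1 - s) / (2 - s)) * lam ^ n \<le> lam ^ (k * n)"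
  shows "0 \<le> d"
    and "2 * (3 * ((1 - s) * A) * c\<^sup>2 / (2048 * (s * A)\<^sup>2)) *
           ((\<Prod>i<k * n. a i)\<^sup>2 / ((1 - s) * A) + noise_variance a (sqrt (2 / A\<^sup>2)) (k * n)) \<le> d\<^sup>2"
proof -
  note first = neighbour_gap_ge(1)[OF A s c p k, folded lam_def, folded a_def, folded d_def]
  note last_gap = neighbour_gap_ge(2)[OF A s c p k, folded lam_def, folded a_def, folded d_def]
  have lam: "0 < lam" "lam \<le> 1" using A by (simp_all add: lam_def)
  have a: "0 < a j" "a j \<le> 1 - (1 - 3 * s / 4) / A" for j
    unfolding a_def
    using less_le_trans[OF neighbour_factor_bounds(1,2)[OF A s]] neighbour_factor_bounds(3)[OF A s] .
  then have P: "0 < (\<Prod>i<k * n. a i)" by (simp add: prod_pos)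
  have "0 \<le> 3 / 4 * (s / A) * c * ((1 - s) + s * lam ^ n) * (\<Prod>i<k * n. a i)"
    using A s c lam P by (intro mult_nonneg_nonneg add_nonneg_nonneg) auto
  with first show "0 \<le> d" by linarith
  define w where "w = sqrt ((1 - s) / (2 - s))"
  have w: "0 \<le> w" "w\<^sup>2 = (1 - s) / (2 - s)" using s by (auto simp: w_def)
  have "s * w * lam ^ n \<le> s * lam ^ (k * n)"
    using last s by (simp add: w_def mult.assoc)
  then have "3 / 4 * (s / A) * c * ((1 - s) + s * w * lam ^ n) * lam ^ n
      \<le> 3 / 4 * (s / A) * c * ((1 - s) + s * lam ^ (k * n)) * lam ^ n"
    using A s c lam by (intro mult_right_mono mult_left_mono add_left_mono) auto
  with last_gap have second: "3 / 4 * (s / A) * c * ((1 - s) + s * w * lam ^ n) * lam ^ n \<le> d"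
    by linarith
  have "noise_variance a (sqrt (2 / A\<^sup>2)) (k * n) \<le> (2 / A\<^sup>2) / (1 - (1 - (1 - 3 * s / 4) / A)\<^sup>2)"
    using noise_variance_le[of a "1 - (1 - 3 * s / 4) / A" "sqrt (2 / A\<^sup>2)" "k * n"] a
      neighbour_factor_bounds(4)[OF A s] by (simp add: less_imp_le)
  moreover have "lam ^ n \<le> 1" using lam by (simp add: power_le_one)
  ultimately show "2 * (3 * ((1 - s) * A) * c\<^sup>2 / (2048 * (s * A)\<^sup>2)) *
           ((\<Prod>i<k * n. a i)\<^sup>2 / ((1 - s) * A) + noise_variance a (sqrt (2 / A\<^sup>2)) (k * n)) \<le> d\<^sup>2"
    using gap_square_dominates_variance[OF A s c L _ w P first second noise_variance_nonneg] by simp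
qed

lemma sgld_coefficients_neighbour:
  fixes \<alpha> \<beta> \<eta> x c A s :: real and n p :: nat
  defines "D \<equiv> replicate (n - 1) (x, c * x) @ [(x / 2, c * x / 2)]"
  assumes \<sigma>: "\<sigma> permutes {..<n}" "0 < n" "\<sigma> p = n - 1" and "A \<noteq> 0"
    and \<alpha>: "\<alpha> = (1 - s) * A" and x: "real n * \<beta> * x\<^sup>2 = s * A" and \<eta>: "\<eta> = 2 / A\<^sup>2"
  shows "sgld_factor \<alpha> \<beta> \<eta> D \<sigma> = neighbour_factor A s n p"
    and "sgld_shift \<alpha> \<beta> \<eta> D \<sigma> = neighbour_shift A s c n p"
proof -
  have "length D = n" using \<sigma>(2) by (simp add: D_def)
  moreover have "real n * \<beta> * (x / 2)\<^sup>2 = s * A / 4" using x by (simp add: power_divide)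
  ultimately have "sgld_factor \<alpha> \<beta> \<eta> D \<sigma> j = neighbour_factor A s n p j \<and>
      sgld_shift \<alpha> \<beta> \<eta> D \<sigma> j = neighbour_shift A s c n p j" for j
    using nth_replicate_snoc_permutes[OF \<sigma>, of "(x, c * x)" "(x / 2, c * x / 2)" j] \<open>A \<noteq> 0\<close> x
    unfolding sgld_factor_def sgld_shift_def D_def
    by (auto simp: neighbour_factor_def neighbour_shift_def \<alpha> \<eta> power2_eq_square field_simps)
  then show "sgld_factor \<alpha> \<beta> \<eta> D \<sigma> = neighbour_factor A s n p"
    and "sgld_shift \<alpha> \<beta> \<eta> D \<sigma> = neighbour_shift A s c n p"
    by auto
qed

lemma measure_sgld_output_neighbour_le:
  fixes \<alpha> \<beta> \<eta> x c A s :: real and n k :: nat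
  defines "lam \<equiv> 1 - 1 / A" and "K \<equiv> 3 * \<alpha> * c\<^sup>2 / (2048 * (s * A)\<^sup>2)"
  assumes A: "6 < A" and s: "1/2 < s" "s < 1" and c: "0 < c" and n: "0 < n" and k: "1 \<le> k"
    and \<alpha>: "\<alpha> = (1 - s) * A" and x: "real n * \<beta> * x\<^sup>2 = s * A" and \<eta>: "\<eta> = 2 / A\<^sup>2"
    and L: "2/3 \<le> lam ^ n" and last: "sqrt (\<alpha> / (\<alpha> + A)) * lam ^ n \<le> lam ^ (k * n)"
  shows "measure (sgld_output \<alpha> \<beta> \<eta> (replicate (n - 1) (x, c * x) @ [(x / 2, c * x / 2)]) (k * n))
           {affine_mean (\<lambda>_. lam) (\<lambda>_. c * s / A) (k * n)..} \<le> exp (- K)"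
proof (rule measure_sgld_output_atLeast_le)
  let ?D = "replicate (n - 1) (x, c * x) @ [(x / 2, c * x / 2)]"
  let ?t = "affine_mean (\<lambda>_. lam) (\<lambda>_. c * s / A) (k * n)"
  have \<alpha>0: "0 < \<alpha>" using A s by (simp add: \<alpha>)
  then interpret N: prob_space "sgld_noise \<alpha>" by (rule prob_space_sgld_noise)
  fix \<sigma> assume "\<sigma> permutes {..<length ?D}"
  then have \<sigma>: "\<sigma> permutes {..<n}" using n by simp
  obtain p where p: "p < n" "\<sigma> p = n - 1" using permutes_obtain_last[OF \<sigma> n] .
  define a where "a = neighbour_factor A s n p"
  define d where "d = ?t - affine_mean a (neighbour_shift A s c n p) (k * n)"
  define v where "v = (\<Prod>i<k * n. a i)\<^sup>2 / \<alpha> + noise_variance a (sqrt \<eta>) (k * n)"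
  have "A \<noteq> 0" using A by simp
  note coef = sgld_coefficients_neighbour[OF \<sigma> n p(2) this \<alpha> x \<eta>, folded a_def]
  have "\<alpha> / (\<alpha> + A) = (1 - s) / (2 - s)" using A s by (simp add: \<alpha> field_simps)
  then have "0 \<le> d" and gap: "2 * K * v \<le> d\<^sup>2"
    using neighbour_gap_dominates_variance[OF A s c p(1) k, folded lam_def a_def] L last
    unfolding d_def v_def K_def \<alpha> \<eta> by (simp_all add: mult.assoc)
  have a_pos: "0 < a j" for j
    unfolding a_def using less_le_trans[OF neighbour_factor_bounds(1,2)[OF A s]] .
  then have "0 < (\<Prod>i<k * n. a i)" by (simp add: prod_pos)
  then have v: "0 < v"
    using \<alpha>0 noise_variance_nonneg[of a "sqrt \<eta>" "k * n"] unfolding v_def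
    by (intro add_pos_nonneg divide_pos_pos zero_less_power)
  have "N.prob {z \<in> space (sgld_noise \<alpha>). d \<le> sgld_iter \<alpha> \<beta> \<eta> ?D \<sigma> (fst z) (snd z) (k * n)
        - affine_mean a (neighbour_shift A s c n p) (k * n)}
      \<le> exp (- d\<^sup>2 / (2 * (sqrt v)\<^sup>2))"
    using N.prob_normal_tail_le[OF distributed_sgld_iter[of \<alpha> \<eta> \<beta> ?D \<sigma> "k * n", unfolded coef]]
      \<alpha>0 A v \<open>0 \<le> d\<close> a_pos
    by (simp add: \<eta> v_def less_imp_neq[symmetric])
  also have "\<dots> \<le> exp (- K)" using gap v by (simp add: field_simps)
  finally show "N.prob {z \<in> space (sgld_noise \<alpha>). ?t \<le> sgld_iter \<alpha> \<beta> \<eta> ?D \<sigma> (fst z) (snd z) (k * n)} \<le> exp (- K)"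
    by (simp add: d_def)
qed (use A s in \<open>simp_all add: \<alpha>\<close>)

section \<open>Parameters of the theorem\<close>

lemma power_ge_sqrt_ceiling_log:
  fixes lam y :: real and n :: nat
  assumes lam: "0 < lam" "lam < 1" and y: "0 < y" "y < 1" and n: "0 < n"
  shows "sqrt y * lam ^ n \<le> lam ^ ((nat \<lceil>1 / (2 * real n) * log lam y - 1\<rceil> + 1) * n)"
proof -
  define kdot where "kdot = 1 / (2 * real n) * log lam y - 1"
  have "0 < log lam y" using lam y by (simp add: log_def divide_neg_neg)
  then have "real (nat \<lceil>kdot\<rceil>) \<le> kdot + 1"
    using n by (simp add: kdot_def)
  then have "real (nat \<lceil>kdot\<rceil> + 1) * real n \<le> (kdot + 2) * real n"
    by (intro mult_right_mono) auto
  then have T: "real ((nat \<lceil>kdot\<rceil> + 1) * n) \<le> (kdot + 2) * real n"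
    by (simp only: of_nat_mult)
  have "sqrt y * lam ^ n = lam powr (log lam y / 2) * lam powr real n"
    using lam y by (simp add: powr_half_sqrt_powr powr_realpow)
  also have "\<dots> = lam powr ((kdot + 2) * real n)"
  proof -
    have "(kdot + 2) * real n = log lam y / 2 + real n" using n by (simp add: kdot_def field_simps)
    then show ?thesis by (simp add: powr_add)
  qed
  also have "\<dots> \<le> lam powr real ((nat \<lceil>kdot\<rceil> + 1) * n)"
    using lam T by (intro powr_mono') auto
  also have "\<dots> = lam ^ ((nat \<lceil>kdot\<rceil> + 1) * n)"
    using lam by (intro powr_realpow) simp
  finally show ?thesis
    unfolding kdot_def .
qed

lemma rescaled_parameters:
  fixes \<alpha> X :: real and n :: nat
  assumes "0 < \<alpha>" "3 < X" "2 \<le> n" "\<alpha> < real n * X"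
  defines "A \<equiv> \<alpha> + real n * X"
  defines "s \<equiv> real n * X / A"
  shows "6 < A" "1/2 < s" "s < 1" "\<alpha> = (1 - s) * A" "2/3 \<le> (1 - 1 / A) ^ n"
proof -
  have "2 * 3 < real n * X" using assms(2,3) by (intro mult_le_less_imp_less) auto
  then show "6 < A" using assms(1) by (simp add: A_def)
  then show "1/2 < s" "s < 1" "\<alpha> = (1 - s) * A"
    using assms(1,4) by (simp_all add: s_def A_def field_simps)
  have "real n * 3 \<le> real n * X" using assms(2) by (intro mult_left_mono) auto
  then have "3 * real n \<le> A" using assms(1) by (simp add: A_def)
  then have "real n / A \<le> 1 / 3" using \<open>6 < A\<close> by (simp add: field_simps)
  moreover have "1 - real n / A \<le> (1 - 1 / A) ^ n"
    using \<open>6 < A\<close> Bernoulli_inequality[of "- (1 / A)" n] by simp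
  ultimately show "2/3 \<le> (1 - 1 / A) ^ n" by linarith
qed

lemma iteration_count_bound:
  fixes \<alpha> A :: real and n :: nat
  assumes "0 < \<alpha>" "1 < A" "0 < n"
  defines "lam \<equiv> 1 - 1 / A" and "\<eta> \<equiv> 2 / A\<^sup>2"
  shows "sqrt (\<alpha> / (\<alpha> + A)) * lam ^ n
           \<le> lam ^ ((nat \<lceil>1 / (2 * real n) * log lam (1 / (1 + 1 / (\<alpha> * \<eta>) * (1 - lam\<^sup>2))) - 1\<rceil> + 1) * n)"
proof -
  define y where "y = 1 / (1 + 1 / (\<alpha> * \<eta>) * (1 - lam\<^sup>2))"
  have lam: "0 < lam" "lam < 1" using assms(2) by (simp_all add: lam_def)
  have ratio: "1 / (\<alpha> * \<eta>) * (1 - lam\<^sup>2) = (2 * A - 1) / (2 * \<alpha>)"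
    using assms(1,2) by (simp add: lam_def \<eta>_def field_simps power2_eq_square)
  have y: "y = 2 * \<alpha> / (2 * \<alpha> + (2 * A - 1))"
    unfolding y_def ratio using assms(1,2) by (simp add: field_simps)
  have "\<alpha> / (\<alpha> + A) = 2 * \<alpha> / (2 * \<alpha> + 2 * A)" using assms(1,2) by (simp add: field_simps)
  also have "\<dots> \<le> y" unfolding y using assms(1,2) by (intro frac_le) auto
  finally have "sqrt (\<alpha> / (\<alpha> + A)) * lam ^ n \<le> sqrt y * lam ^ n"
    using lam by (intro mult_right_mono) auto
  also have "\<dots> \<le> lam ^ ((nat \<lceil>1 / (2 * real n) * log lam y - 1\<rceil> + 1) * n)"
    using lam assms(1-3) by (intro power_ge_sqrt_ceiling_log) (simp_all add: y)
  finally show ?thesis by (simp only: y_def)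
qed

lemma privacy_constant_le:
  fixes \<alpha> X c :: real and n :: nat
  assumes "0 < \<alpha>" "0 < X" "0 < n"
  shows "exp (- 2 / X) * (\<alpha> / max 6 (1 + 2 * exp (1 / X))) * (3 / (32 * X))\<^sup>2 * (c / real n)\<^sup>2
           \<le> 3 * \<alpha> * c\<^sup>2 / (2048 * (real n * X)\<^sup>2)"
proof -
  have "exp (- 2 / X) * (\<alpha> / max 6 (1 + 2 * exp (1 / X))) \<le> 1 * (\<alpha> / 6)"
    using assms by (intro mult_mono divide_left_mono) auto
  then have "exp (- 2 / X) * (\<alpha> / max 6 (1 + 2 * exp (1 / X))) * ((3 / (32 * X))\<^sup>2 * (c / real n)\<^sup>2)
      \<le> \<alpha> / 6 * ((3 / (32 * X))\<^sup>2 * (c / real n)\<^sup>2)"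
    by (intro mult_right_mono) auto
  also have "\<dots> = 3 * \<alpha> * c\<^sup>2 / (2048 * (real n * X)\<^sup>2)"
    using assms by (simp add: field_simps power2_eq_square)
  finally show ?thesis by (simp add: mult.assoc)
qed

lemma dp_bound_violated:
  fixes m1 m2 K \<epsilon> \<delta> :: real
  assumes "1 / 2 \<le> m1" "m2 \<le> exp (- K)" "\<epsilon> < K + ln (1 / 2 - \<delta>)" "\<delta> < 1 / 2"
  shows "exp \<epsilon> * m2 + \<delta> < m1"
proof -
  have "exp \<epsilon> * m2 \<le> exp (\<epsilon> - K)" using assms(2) by (simp add: exp_diff exp_minus field_simps)
  also have "\<dots> < exp (ln (1 / 2 - \<delta>))" using assms(3) by simp
  also have "\<dots> = 1 / 2 - \<delta>" using assms(4) by simp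
  finally show ?thesis using assms(1) by linarith
qed

theorem lemmaA6:
  fixes \<alpha> \<beta> xh c \<epsilon> \<delta> :: real and n :: nat
  assumes "\<alpha> > 0" "\<beta> > 0" "xh > 0" "c > 0" "n \<ge> 2"
    and "xh\<^sup>2 * \<beta> > 3"
    and "real n > Max {1 / (2 * \<alpha> * xh\<^sup>2 * \<beta>) - 1 / (xh\<^sup>2 * \<beta>),
                       \<alpha> / (xh\<^sup>2 * \<beta>),
                       \<alpha> / (xh\<^sup>2 * \<beta>) * (exp (2 / (xh\<^sup>2 * \<beta>)) - 2) + 1 / (2 * xh\<^sup>2 * \<beta>)}"
    and "0 \<le> \<delta>" "\<delta> < 0.5"
    and "\<epsilon> < exp (- 2 / (xh\<^sup>2 * \<beta>)) * (\<alpha> / max 6 (1 + 2 * exp (1 / (xh\<^sup>2 * \<beta>))))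
                 * (3 / (32 * xh\<^sup>2 * \<beta>))\<^sup>2 * (c / real n)\<^sup>2 + ln (0.5 - \<delta>)"
  defines "\<eta> \<equiv> 2 / (\<alpha> + real n * xh\<^sup>2 * \<beta>)\<^sup>2"
  defines "lam \<equiv> 1 - \<eta> / 2 * (\<alpha> + real n * xh\<^sup>2 * \<beta>)"
  defines "D1 \<equiv> replicate n (xh, c * xh)"
    and "D2 \<equiv> replicate (n - 1) (xh, c * xh) @ [(xh / 2, c * xh / 2)]"
  defines "kdot \<equiv> 1 / (2 * real n) * log lam (1 / (1 + 1 / (\<alpha> * \<eta>) * (1 - lam\<^sup>2))) - 1"
  defines "T \<equiv> (nat \<lceil>kdot\<rceil> + 1) * n"
  shows "\<exists>S \<in> sets borel.
           measure (sgld_output \<alpha> \<beta> \<eta> D1 T) S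
             > exp \<epsilon> * measure (sgld_output \<alpha> \<beta> \<eta> D2 T) S + \<delta>"
proof -
  define X where "X = xh\<^sup>2 * \<beta>"
  define A where "A = \<alpha> + real n * X"
  define s where "s = real n * X / A"
  define K where "K = 3 * \<alpha> * c\<^sup>2 / (2048 * (s * A)\<^sup>2)"
  define t where "t = affine_mean (\<lambda>_. lam) (\<lambda>_. c * s / A) T"
  have X: "3 < X" using assms(6) by (simp add: X_def)
  have "\<alpha> / X < real n"
    using assms(7) Max_ge[of _ "\<alpha> / (xh\<^sup>2 * \<beta>)"] by (force simp: X_def)
  then have "\<alpha> < real n * X" using X by (simp add: field_simps)
  note AS = rescaled_parameters[OF assms(1) X assms(5) this, folded A_def, folded s_def]
  have nX: "real n * X = s * A" "real n * \<beta> * xh\<^sup>2 = s * A"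
    using AS(1) by (simp_all add: s_def X_def mult_ac)
  have A: "\<alpha> + real n * xh\<^sup>2 * \<beta> = A" by (simp add: A_def X_def mult.assoc)
  have \<eta>: "\<eta> = 2 / A\<^sup>2" by (simp add: \<eta>_def A)
  have lam: "lam = 1 - 1 / A" using AS(1) unfolding lam_def A \<eta> by (simp add: power2_eq_square)
  have last: "sqrt (\<alpha> / (\<alpha> + A)) * lam ^ n \<le> lam ^ T"
    unfolding T_def kdot_def \<eta> lam using assms(1,5) AS(1) by (intro iteration_count_bound) auto
  have "1 / 2 \<le> measure (sgld_output \<alpha> \<beta> \<eta> D1 T) {t..}"
    unfolding D1_def t_def lam using AS(1,3,4) nX(2) \<eta> assms(5)
    by (intro measure_sgld_output_replicate_rescaled_ge_half) auto
  moreover have "measure (sgld_output \<alpha> \<beta> \<eta> D2 T) {t..} \<le> exp (- K)"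
    unfolding D2_def t_def K_def T_def lam
    by (rule measure_sgld_output_neighbour_le[OF AS(1-3) assms(4) _ _ AS(4) nX(2) \<eta> AS(5)])
      (use assms(5) last in \<open>auto simp: T_def lam\<close>)
  moreover have "\<epsilon> < K + ln (1 / 2 - \<delta>)"
    using assms(10)[unfolded mult.assoc[of 32], folded X_def] privacy_constant_le[of \<alpha> X n c] assms(1,5) X
    by (simp add: K_def nX(1))
  ultimately have "exp \<epsilon> * measure (sgld_output \<alpha> \<beta> \<eta> D2 T) {t..} + \<delta> < measure (sgld_output \<alpha> \<beta> \<eta> D1 T) {t..}"
    using assms(9) by (intro dp_bound_violated) auto
  then show ?thesis by auto
qed

end
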